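(* Let $p\in\{3,4,\dots\}$, $a\ge0$, $b>0$ satisfy either ($a>0$ and $b\in[p/2-1,p/2]$) or ($a=0$ and $b\in[p/2-1,p/2)$). Let $l\in\{1,2\}$ and let $h:\mathbb{Z}^+\to\mathbb{R}$ satisfy $h(n)=O(n^{-l})$ as $n\to\infty$. For $y>0$ let $N\sim\mathrm{Poisson}(y/2)$. Then there exists $d\in(0,\infty)$ such that for every $k\in\{1,2,3\}$ and every $y>0$, $$\left|\frac{E[h(N)w_{k-1}(N)\mid y]}{E[w_{k-1}(N)\mid y]}\right|\le\frac{d}{y^l}.$$
   Context: $\mathbb{Z}^+=\{0,1,2,\dots\}$; $g_0(z)=(a+z)^{-b}$; for $n\in\mathbb{Z}^+$ and $k\in\{0,1,2,3\}$, $w_k(n)=\int_0^\infty\frac{g_0(z)(z/2)^{n+p/2+k-1}e^{-z/2}}{2\Gamma(n+p/2)}dz$. $E[\cdot\mid y]$ denotes expectation with $N\sim\mathrm{Poisson}(y/2)$. *)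

theory Defs
  imports "HOL-Analysis.Analysis" "HOL-Probability.Probability" "HOL-Library.Landau_Symbols"
begin

definition g0 :: "real \<Rightarrow> real \<Rightarrow> real \<Rightarrow> real" where
  "g0 a b z = (a + z) powr (- b)"

definition w :: "nat \<Rightarrow> real \<Rightarrow> real \<Rightarrow> nat \<Rightarrow> nat \<Rightarrow> real" where
  "w p a b k n = (\<integral>z\<in>{0<..}. g0 a b z * (z / 2) powr (real n + real p / 2 + real k - 1)
        * exp (- z / 2) / (2 * Gamma (real n + real p / 2)) \<partial>lborel)"

definition condE :: "(nat \<Rightarrow> real) \<Rightarrow> real \<Rightarrow> real" where
  "condE f y = measure_pmf.expectation (poisson_pmf (y / 2)) f"

end

theory Submission
  imports Defs
begin

text \<open>
  With \<open>I(s) = \<integral>\<^sub>0\<^sup>\<infinity> (a+z)^(-b) (z/2)^s e^(-z/2) dz\<close> one has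
  \<open>w\<^sub>k(n) = I(n + p/2 + k - 1) / (2 \<Gamma>(n + p/2))\<close>. Integrating the derivative of
  \<open>(a+z)^(-b) (z/2)^s e^(-z/2)\<close> over \<open>(0, \<infinity>)\<close> gives \<open>(s - b) I(s - 1) \<le> I(s)\<close>,
  and together with \<open>\<Gamma>(x + 1) = x \<Gamma>(x)\<close> this yields \<open>w\<^sub>k(n) \<le> K w\<^sub>k(n + 1)\<close> for a constant \<open>K\<close>.
  The Poisson weights \<open>P(n)\<close> with mean \<open>\<mu> = y/2\<close> satisfy \<open>P(n) / (n+1)^l \<le> l! P(n+l) / \<mu>^l\<close>,
  so the decay \<open>|h(n)| \<le> C / (n+1)^l\<close> can be traded for a shift of the index by \<open>l\<close>, which costs
  at most \<open>K^l\<close>: \<open>|E[h(N) w\<^sub>k(N)]| \<le> C l! (2K/y)^l E[w\<^sub>k(N)]\<close>.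
\<close>

definition gamma_kernel :: "real \<Rightarrow> real \<Rightarrow> real \<Rightarrow> real \<Rightarrow> real" where
  "gamma_kernel a b s z = (a + z) powr (- b) * (z / 2) powr s * exp (- z / 2)"

definition gamma_kernel_integral :: "real \<Rightarrow> real \<Rightarrow> real \<Rightarrow> real" where
  "gamma_kernel_integral a b s = (LINT z:{0<..}|lborel. gamma_kernel a b s z)"

lemma w_eq_gamma_kernel_integral:
  "w p a b k n = gamma_kernel_integral a b (real n + real p / 2 + real k - 1)
                   / (2 * Gamma (real n + real p / 2))"
  unfolding w_def gamma_kernel_integral_def gamma_kernel_def g0_def by simp

lemma gamma_kernel_pos: "a \<ge> 0 \<Longrightarrow> z > 0 \<Longrightarrow> gamma_kernel a b s z > 0"
  unfolding gamma_kernel_def by auto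

lemma continuous_on_gamma_kernel: "a \<ge> 0 \<Longrightarrow> continuous_on {0<..} (gamma_kernel a b s)"
  unfolding gamma_kernel_def by (intro continuous_intros) auto

lemma set_borel_measurable_gamma_kernel:
  "a \<ge> 0 \<Longrightarrow> set_borel_measurable lborel {0<..} (gamma_kernel a b s)"
  using set_measurable_continuous_on[OF _ continuous_on_gamma_kernel]
  by (simp add: set_borel_measurable_def)

lemma set_integrable_powr_exp_half:
  assumes "s > -1"
  shows "set_integrable lborel {0<..} (\<lambda>z::real. (z / 2) powr s * exp (- z / 2))"
proof -
  have "((\<lambda>t. t powr s / exp t) has_integral Gamma (s + 1)) {0..}"
    using Gamma_integral_real[of "s + 1"] assms by simp
  hence "(\<lambda>t. t powr s / exp t) absolutely_integrable_on {0..}"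
    by (subst absolutely_integrable_on_iff_nonneg) auto
  hence "integrable lborel (\<lambda>t::real. indicator {0..} t *\<^sub>R (t powr s / exp t))"
    unfolding set_integrable_def by (subst (asm) integrable_completion) auto
  from lborel_integrable_real_affine[OF this, of "1/2" 0]
  have "integrable lborel (\<lambda>x::real. indicator {0..} (x / 2) *\<^sub>R ((x / 2) powr s / exp (x / 2)))"
    by simp
  moreover have "indicator {0..} (x / 2) *\<^sub>R ((x / 2) powr s / exp (x / 2))
      = indicator {0..} x *\<^sub>R ((x / 2) powr s * exp (- x / 2))" for x :: real
    by (auto simp: indicator_def exp_minus field_simps)
  ultimately have "set_integrable lborel {0..} (\<lambda>x::real. (x / 2) powr s * exp (- x / 2))"
    unfolding set_integrable_def by simp
  thus ?thesis by (rule set_integrable_subset) auto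
qed

lemma set_integrable_gamma_kernel:
  assumes "a \<ge> 0" "b \<ge> 0" "s > -1" "a = 0 \<Longrightarrow> s - b > -1"
  shows "set_integrable lborel {0<..} (gamma_kernel a b s)"
proof (cases "a = 0")
  case True
  have eq: "gamma_kernel a b s z = 2 powr (- b) * ((z / 2) powr (s - b) * exp (- z / 2))"
    if "z > 0" for z
  proof -
    have "z powr (- b) = 2 powr (- b) * (z / 2) powr (- b)"
      using that by (subst powr_mult[symmetric]) auto
    moreover have "(z / 2) powr (s - b) = (z / 2) powr s * (z / 2) powr (- b)"
      by (simp add: powr_add[symmetric])
    ultimately show ?thesis using True by (simp add: gamma_kernel_def)
  qed
  have "set_integrable lborel {0<..}
      (\<lambda>z. 2 powr (- b) * ((z / 2) powr (s - b) * exp (- z / 2)))"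
    using set_integrable_powr_exp_half[of "s - b"] assms True by auto
  thus ?thesis
    by (rule set_integrable_cong[THEN iffD1, rotated -1]) (auto simp: eq)
next
  case False
  with assms have "a > 0" by auto
  show ?thesis
  proof (rule set_integrable_bound[OF _ set_borel_measurable_gamma_kernel[OF assms(1)]])
    show "set_integrable lborel {0<..} (\<lambda>z. a powr (- b) * ((z / 2) powr s * exp (- z / 2)))"
      using set_integrable_powr_exp_half[OF assms(3)] by auto
    have "norm (gamma_kernel a b s x) \<le> norm (a powr (- b) * ((x / 2) powr s * exp (- x / 2)))"
      if "x > 0" for x
    proof -
      have "(a + x) powr (- b) \<le> a powr (- b)"
        using \<open>a > 0\<close> that assms by (intro powr_mono2') auto
      thus ?thesis
        using that \<open>a > 0\<close> by (auto simp: gamma_kernel_def abs_mult intro!: mult_right_mono)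
    qed
    thus "AE x in lborel. x \<in> {0<..} \<longrightarrow>
        norm (gamma_kernel a b s x) \<le> norm (a powr (- b) * ((x / 2) powr s * exp (- x / 2)))"
      by auto
  qed
qed

lemma gamma_kernel_integral_pos:
  assumes int: "set_integrable lborel {0<..} (gamma_kernel a b s)" and a: "a \<ge> 0"
  shows "gamma_kernel_integral a b s > 0"
proof -
  let ?f = "\<lambda>x. indicator {0<..} x *\<^sub>R gamma_kernel a b s x"
  have int': "integrable lborel ?f"
    using int by (simp add: set_integrable_def)
  have nonneg: "AE x in lborel. 0 \<le> ?f x"
    using gamma_kernel_pos[OF a] by (intro AE_I2) (auto simp: indicator_def less_imp_le)
  have "gamma_kernel_integral a b s \<ge> 0"
    unfolding gamma_kernel_integral_def set_lebesgue_integral_def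
    using nonneg by (rule integral_nonneg_AE)
  moreover have "gamma_kernel_integral a b s \<noteq> 0"
  proof
    assume "gamma_kernel_integral a b s = 0"
    hence "AE x in lborel. ?f x = 0"
      using integral_nonneg_eq_0_iff_AE[OF int' nonneg]
      by (simp add: gamma_kernel_integral_def set_lebesgue_integral_def)
    hence "AE x in lborel. x \<notin> {0<..<1::real}"
      by eventually_elim
        (use gamma_kernel_pos[OF a, of _ b s] in \<open>fastforce simp: indicator_def split: if_splits\<close>)
    hence "emeasure lborel {0<..<1::real} = 0"
      by (subst (asm) AE_iff_measurable[OF _ refl])
        (auto simp: greaterThanLessThan_def greaterThan_def lessThan_def Collect_conj_eq[symmetric])
    thus False by simp
  qed
  ultimately show ?thesis by linarith
qed

lemma gamma_kernel_has_real_derivative: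
  fixes a b m x :: real
  assumes "a \<ge> 0" "x > 0"
  shows "(gamma_kernel a b m has_real_derivative
     (- b * gamma_kernel a (b + 1) m x + m / 2 * gamma_kernel a b (m - 1) x
       - gamma_kernel a b m x / 2)) (at x)"
proof -
  have D: "(gamma_kernel a b m has_real_derivative
     (- b * ((a + x) powr (- b - 1) * (x / 2) powr m * exp (- x / 2))
       + (m / 2) * gamma_kernel a b (m - 1) x - (1 / 2) * gamma_kernel a b m x)) (at x)"
    unfolding gamma_kernel_def using assms
    apply -
    apply (rule derivative_eq_intros refl | simp)+
    apply (simp add: field_simps)
    done
  have E: "gamma_kernel a (b + 1) m x = (a + x) powr (- b - 1) * (x / 2) powr m * exp (- x / 2)"
    unfolding gamma_kernel_def by simp
  from D show ?thesis by (rule DERIV_cong) (simp add: E)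
qed

lemma gamma_kernel_tendsto_0_at_right:
  assumes "a \<ge> 0" "m > 0" "a = 0 \<Longrightarrow> m > b"
  shows "(gamma_kernel a b m \<longlongrightarrow> 0) (at_right 0)"
proof (cases "a = 0")
  case True
  with assms have "m > b" by auto
  thus ?thesis unfolding gamma_kernel_def True by real_asymp
next
  case False
  with assms have "a > 0" by auto
  with assms show ?thesis unfolding gamma_kernel_def by real_asymp
qed

lemma gamma_kernel_tendsto_0_at_top: "(gamma_kernel a b m \<longlongrightarrow> 0) at_top"
  unfolding gamma_kernel_def by real_asymp

lemma gamma_kernel_integral_by_parts:
  assumes a: "a \<ge> 0" and b: "b \<ge> 0" and m: "m > 0" "a = 0 \<Longrightarrow> m - 1 - b > -1"
  shows "b * gamma_kernel_integral a (b + 1) m + gamma_kernel_integral a b m / 2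
           = m / 2 * gamma_kernel_integral a b (m - 1)"
proof -
  have int_prev: "set_integrable lborel {0<..} (gamma_kernel a b (m - 1))"
    using set_integrable_gamma_kernel[OF a b] m by auto
  have int: "set_integrable lborel {0<..} (gamma_kernel a b m)"
    using set_integrable_gamma_kernel[OF a b] m by fastforce
  have int_succ: "set_integrable lborel {0<..} (gamma_kernel a (b + 1) m)"
    using set_integrable_gamma_kernel[OF a, of "b + 1"] b m by fastforce
  define F' where "F' x = - b * gamma_kernel a (b + 1) m x + m / 2 * gamma_kernel a b (m - 1) x
                            - gamma_kernel a b m x / 2" for x
  have int_F': "set_integrable lborel {0<..} F'"
    unfolding F'_def using int_prev int int_succ
    by (intro set_integral_diff set_integral_add set_integrable_mult_right set_integrable_divide)
  have "(LBINT x=ereal 0..\<infinity>. F' x) = 0 - 0"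
  proof (rule interval_integral_FTC_integrable[where F = "gamma_kernel a b m"])
    fix x assume "ereal 0 < ereal x"
    hence x: "x > 0" by simp
    show "(gamma_kernel a b m has_vector_derivative F' x) (at x)"
      using gamma_kernel_has_real_derivative[OF a x] unfolding F'_def
      by (simp add: has_real_derivative_iff_has_vector_derivative)
    have "continuous_on {0<..} F'"
      unfolding F'_def using continuous_on_gamma_kernel[OF a]
      by (intro continuous_intros) auto
    thus "isCont F' x"
      using x by (simp add: continuous_on_eq_continuous_at)
  next
    show "set_integrable lborel (einterval (ereal 0) \<infinity>) F'"
      using int_F' by (simp add: einterval_def greaterThan_def)
  next
    show "((gamma_kernel a b m \<circ> real_of_ereal) \<longlongrightarrow> 0) (at_right (ereal 0))"
      unfolding ereal_tendsto_simps using m a by (intro gamma_kernel_tendsto_0_at_right) auto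
    show "((gamma_kernel a b m \<circ> real_of_ereal) \<longlongrightarrow> 0) (at_left \<infinity>)"
      unfolding ereal_tendsto_simps by (rule gamma_kernel_tendsto_0_at_top)
  qed simp
  hence "(LINT x:{0<..}|lborel. F' x) = 0"
    by (simp add: interval_integral_to_infinity_eq)
  thus ?thesis
    unfolding F'_def gamma_kernel_integral_def using int_prev int int_succ
    by (subst (asm) set_integral_diff set_integral_add, auto)+
qed

lemma gamma_kernel_succ_le:
  assumes "a \<ge> 0" "x > 0"
  shows "gamma_kernel a (b + 1) m x \<le> gamma_kernel a b (m - 1) x / 2"
proof -
  have base: "(a + x) powr (- (b + 1)) = (a + x) powr (- b) / (a + x)"
    and exponent: "(x / 2) powr m = (x / 2) powr (m - 1) * (x / 2)"
    using assms by (simp_all add: powr_diff powr_add[symmetric])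
  have "gamma_kernel a (b + 1) m x = gamma_kernel a b (m - 1) x * ((x / 2) / (a + x))"
    unfolding gamma_kernel_def base exponent by (simp add: algebra_simps)
  also have "\<dots> \<le> gamma_kernel a b (m - 1) x * (1 / 2)"
    using assms gamma_kernel_pos[OF assms, of b "m - 1"]
    by (intro mult_left_mono) (auto simp: field_simps)
  finally show ?thesis by simp
qed

lemma gamma_kernel_integral_step:
  assumes a: "a \<ge> 0" and b: "b \<ge> 0" and m: "m > 0" "a = 0 \<Longrightarrow> m - 1 - b > -1"
  shows "(m - b) * gamma_kernel_integral a b (m - 1) \<le> gamma_kernel_integral a b m"
proof -
  have "gamma_kernel_integral a (b + 1) m \<le> gamma_kernel_integral a b (m - 1) / 2"
    unfolding gamma_kernel_integral_def
    using set_integrable_gamma_kernel[OF a, of "b + 1" m] set_integrable_gamma_kernel[OF a b, of "m - 1"]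
          b m gamma_kernel_succ_le[OF a]
    by (subst set_integral_divide_zero[symmetric]) (intro set_integral_mono, auto)
  with b have "b * gamma_kernel_integral a (b + 1) m \<le> b * (gamma_kernel_integral a b (m - 1) / 2)"
    by (rule mult_left_mono[rotated])
  with gamma_kernel_integral_by_parts[OF assms] show ?thesis
    by (simp add: algebra_simps)
qed

lemma w_pos:
  assumes "p > 0" "a \<ge> 0" "b \<ge> 0" "a = 0 \<Longrightarrow> b < real p / 2 + real k"
  shows "w p a b k n > 0"
proof -
  have "set_integrable lborel {0<..} (gamma_kernel a b (real n + real p / 2 + real k - 1))"
    using assms by (intro set_integrable_gamma_kernel) auto
  hence "gamma_kernel_integral a b (real n + real p / 2 + real k - 1) > 0"
    using assms(2) by (rule gamma_kernel_integral_pos)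
  moreover have "Gamma (real n + real p / 2) > 0"
    using assms(1) by (intro Gamma_real_pos) auto
  ultimately show ?thesis
    unfolding w_eq_gamma_kernel_integral by simp
qed

lemma w_Suc_eq_gamma_kernel_integral:
  assumes "p > 0"
  shows "w p a b k (Suc n) = gamma_kernel_integral a b (real n + real p / 2 + real k)
           / (2 * ((real n + real p / 2) * Gamma (real n + real p / 2)))"
proof -
  have "real n + real p / 2 \<notin> \<int>\<^sub>\<le>\<^sub>0"
    using assms nonpos_Ints_nonpos[of "real n + real p / 2"] by auto
  hence "Gamma (real (Suc n) + real p / 2) = (real n + real p / 2) * Gamma (real n + real p / 2)"
    using Gamma_plus1[of "real n + real p / 2"] by (simp add: add_ac)
  moreover have "real (Suc n) + real p / 2 + real k - 1 = real n + real p / 2 + real k"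
    by simp
  ultimately show ?thesis
    unfolding w_eq_gamma_kernel_integral by metis
qed

lemma w_le_mult_w_Suc:
  assumes "p > 0" "a \<ge> 0" "b \<ge> 0" "b \<le> real p / 2 + real k"
    and "a = 0 \<Longrightarrow> b < real p / 2 + real k" and "n \<ge> 1"
  shows "w p a b k n \<le> (1 + real p / 2) * w p a b k (Suc n)"
proof -
  define s where "s = real n + real p / 2 + real k - 1"
  define q where "q = real n + real p / 2"
  define I where "I = gamma_kernel_integral a b"
  define G where "G = Gamma q"
  have q: "q > 0" and n: "real n > 0"
    unfolding q_def using assms(1,6) by auto
  have G: "G > 0"
    unfolding G_def using q by (rule Gamma_real_pos)
  have w_n: "w p a b k n = I s / (2 * G)"
    unfolding w_eq_gamma_kernel_integral I_def s_def G_def q_def ..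
  have w_Suc: "w p a b k (Suc n) = I (s + 1) / (2 * (q * G))"
    unfolding w_Suc_eq_gamma_kernel_integral[OF assms(1)] I_def s_def G_def q_def by simp
  have "I s > 0"
    using w_pos[OF assms(1-3,5), of n] G unfolding w_n by (simp add: zero_less_divide_iff)
  hence "real n * I s \<le> (s + 1 - b) * I s"
    using assms(4) unfolding s_def by (intro mult_right_mono) auto
  also have "\<dots> \<le> I (s + 1)"
  proof -
    have "s + 1 > 0" and "a = 0 \<Longrightarrow> s + 1 - 1 - b > -1"
      using assms(1,5) unfolding s_def by auto
    from gamma_kernel_integral_step[OF assms(2,3) this] show ?thesis
      unfolding I_def by simp
  qed
  finally have "I s \<le> I (s + 1) / real n"
    using n by (simp add: field_simps)
  hence "w p a b k n \<le> I (s + 1) / real n / (2 * G)"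
    unfolding w_n using G by (intro divide_right_mono) auto
  also have "\<dots> = q / real n * w p a b k (Suc n)"
    unfolding w_Suc using q G n by (simp add: field_simps)
  also have "\<dots> \<le> (1 + real p / 2) * w p a b k (Suc n)"
  proof (rule mult_right_mono)
    have "real p / 2 * 1 \<le> real p / 2 * real n"
      using assms(6) by (intro mult_left_mono) auto
    thus "q / real n \<le> 1 + real p / 2"
      unfolding q_def using n by (simp add: field_simps)
  qed (use w_pos[OF assms(1-3,5), of "Suc n"] in simp)
  finally show ?thesis .
qed

lemma w_le_const_mult_w_Suc:
  assumes "p > 0" "a \<ge> 0" "b \<ge> 0" "b \<le> real p / 2 + real k"
    and "a = 0 \<Longrightarrow> b < real p / 2 + real k"
  shows "\<exists>K>0. \<forall>n. w p a b k n \<le> K * w p a b k (Suc n)"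
proof -
  let ?W = "w p a b k"
  define K where "K = max (1 + real p / 2) (?W 0 / ?W 1)"
  have W_pos: "?W n > 0" for n
    using w_pos assms by blast
  have "?W n \<le> K * ?W (Suc n)" for n
  proof (cases "n = 0")
    case True
    have "?W 0 = ?W 0 / ?W 1 * ?W 1"
      using W_pos[of 1] by simp
    also have "\<dots> \<le> K * ?W 1"
      using W_pos[of 1] unfolding K_def by (intro mult_right_mono) auto
    finally show ?thesis using True by simp
  next
    case False
    hence "?W n \<le> (1 + real p / 2) * ?W (Suc n)"
      using assms by (intro w_le_mult_w_Suc) auto
    also have "\<dots> \<le> K * ?W (Suc n)"
      using W_pos[of "Suc n"] unfolding K_def by (intro mult_right_mono) auto
    finally show ?thesis .
  qed
  moreover have "K > 0"
    unfolding K_def by (simp add: less_max_iff_disj)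
  ultimately show ?thesis by blast
qed

lemma bigo_inverse_power_imp_bound:
  fixes h :: "nat \<Rightarrow> real"
  assumes "h \<in> O(\<lambda>n. 1 / real n ^ l)"
  shows "\<exists>C>0. \<forall>n. \<bar>h n\<bar> \<le> C / (real n + 1) ^ l"
proof -
  obtain c where c: "c > 0" "eventually (\<lambda>n. norm (h n) \<le> c * norm (1 / real n ^ l)) at_top"
    using assms by (elim landau_o.bigE)
  then obtain N where N: "\<And>n. n \<ge> N \<Longrightarrow> \<bar>h n\<bar> \<le> c * \<bar>1 / real n ^ l\<bar>"
    by (auto simp: eventually_at_top_linorder)
  define M where "M = (\<Sum>n<N + 1. \<bar>h n\<bar> * (real n + 1) ^ l)"
  define C where "C = c * 2 ^ l + M + 1"
  have M: "M \<ge> 0"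
    unfolding M_def by (intro sum_nonneg) auto
  have "\<bar>h n\<bar> \<le> C / (real n + 1) ^ l" for n
  proof (cases "n \<le> N")
    case True
    have "\<bar>h n\<bar> * (real n + 1) ^ l \<le> M"
      unfolding M_def using True by (intro member_le_sum) auto
    also have "\<dots> \<le> C"
      unfolding C_def using c by auto
    finally show ?thesis by (simp add: field_simps)
  next
    case False
    hence n: "n \<ge> N" "n \<ge> 1" by auto
    have "\<bar>h n\<bar> \<le> c * (1 / real n ^ l)"
      using N[OF n(1)] by simp
    also have "\<dots> \<le> c * (2 ^ l / (real n + 1) ^ l)"
    proof (intro mult_left_mono)
      have "(real n + 1) ^ l \<le> (2 * real n) ^ l"
        using n by (intro power_mono) auto
      thus "1 / real n ^ l \<le> 2 ^ l / (real n + 1) ^ l"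
        using n by (simp add: field_simps power_mult_distrib)
    qed (use c in auto)
    also have "\<dots> = c * 2 ^ l / (real n + 1) ^ l"
      by simp
    also have "\<dots> \<le> C / (real n + 1) ^ l"
      unfolding C_def using M by (intro divide_right_mono) auto
    finally show ?thesis .
  qed
  moreover have "C > 0"
    unfolding C_def using c(1) M by (intro add_nonneg_pos add_nonneg_nonneg) simp_all
  ultimately show ?thesis by blast
qed

lemma pmf_expectation_sums:
  fixes p :: "nat pmf" and f :: "nat \<Rightarrow> real"
  assumes "integrable (measure_pmf p) f"
  shows "(\<lambda>n. pmf p n * f n) sums measure_pmf.expectation p f"
proof -
  have "integrable (count_space UNIV) (\<lambda>n. pmf p n *\<^sub>R f n)"
    using assms unfolding measure_pmf_eq_density by (subst (asm) integrable_density) auto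
  from sums_integral_count_space_nat[OF this] show ?thesis
    unfolding measure_pmf_eq_density by (subst integral_density) auto
qed

lemma pochhammer_le_fact_mult_power:
  fixes x :: real
  assumes "x \<ge> 1"
  shows "pochhammer x l \<le> fact l * x ^ l"
proof (induction l)
  case (Suc l)
  have "pochhammer x (Suc l) = pochhammer x l * (x + real l)"
    by (simp add: pochhammer_Suc)
  also have "\<dots> \<le> fact l * x ^ l * ((real l + 1) * x)"
  proof (intro mult_mono)
    have "real l * 1 \<le> real l * x"
      using assms by (intro mult_left_mono) auto
    thus "x + real l \<le> (real l + 1) * x"
      by (simp add: algebra_simps)
  qed (use Suc assms in auto)
  also have "\<dots> = fact (Suc l) * x ^ Suc l"
    by (simp add: algebra_simps)
  finally show ?case .
qed simp

lemma pmf_poisson_add: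
  assumes "\<mu> > 0"
  shows "pmf (poisson_pmf \<mu>) (n + l) = pmf (poisson_pmf \<mu>) n * \<mu> ^ l / pochhammer (real n + 1) l"
proof -
  have "(fact (n + l) :: real) = fact n * pochhammer (real n + 1) l"
    unfolding pochhammer_fact pochhammer_product' by (simp add: add.commute)
  thus ?thesis
    using assms pochhammer_pos[of "real n + 1" l]
    by (simp add: pmf_poisson power_add field_simps)
qed

lemma pmf_poisson_div_power_le:
  assumes "\<mu> > 0"
  shows "pmf (poisson_pmf \<mu>) n / (real n + 1) ^ l \<le> fact l / \<mu> ^ l * pmf (poisson_pmf \<mu>) (n + l)"
proof -
  let ?P = "pmf (poisson_pmf \<mu>)"
  have "?P n / (real n + 1) ^ l = fact l * ?P n / (fact l * (real n + 1) ^ l)"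
    by simp
  also have "\<dots> \<le> fact l * ?P n / pochhammer (real n + 1) l"
    by (intro divide_left_mono pochhammer_le_fact_mult_power mult_pos_pos pochhammer_pos) auto
  also have "\<dots> = fact l / \<mu> ^ l * ?P (n + l)"
    unfolding pmf_poisson_add[OF assms] using assms by (simp del: pmf_poisson)
  finally show ?thesis .
qed

lemma le_power_mult_shift:
  fixes W :: "nat \<Rightarrow> real"
  assumes "\<And>n. W n \<le> K * W (Suc n)" and "K \<ge> 0"
  shows "W n \<le> K ^ l * W (n + l)"
proof (induction l)
  case (Suc l)
  have "K ^ l * W (n + l) \<le> K ^ l * (K * W (Suc (n + l)))"
    using assms by (intro mult_left_mono) auto
  with Suc show ?case by (simp add: ac_simps)
qed simp

lemma poisson_expectation_decay:
  fixes W h :: "nat \<Rightarrow> real"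
  assumes W_nonneg: "\<And>n. W n \<ge> 0" and W_step: "\<And>n. W n \<le> K * W (Suc n)" and K: "K \<ge> 0"
    and h: "\<And>n. \<bar>h n\<bar> \<le> C / (real n + 1) ^ l" and \<mu>: "\<mu> > 0"
    and int: "integrable (measure_pmf (poisson_pmf \<mu>)) W"
  shows "\<bar>measure_pmf.expectation (poisson_pmf \<mu>) (\<lambda>n. h n * W n)\<bar>
           \<le> C * fact l * (K / \<mu>) ^ l * measure_pmf.expectation (poisson_pmf \<mu>) W"
proof -
  let ?P = "pmf (poisson_pmf \<mu>)" and ?E = "measure_pmf.expectation (poisson_pmf \<mu>)"
  define c where "c = C * fact l * (K / \<mu>) ^ l"
  define u where "u n = ?P n * W n" for n
  have C: "C \<ge> 0"
    using order_trans[OF abs_ge_zero h[of 0]] by simp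
  have c: "c \<ge> 0"
    unfolding c_def using C K \<mu> by simp
  have h_bounded: "\<bar>h n\<bar> \<le> C" for n
  proof -
    have "C / (real n + 1) ^ l \<le> C / 1"
      using C by (intro divide_left_mono) (auto simp: one_le_power)
    with h[of n] show ?thesis by simp
  qed
  have int_hW: "integrable (measure_pmf (poisson_pmf \<mu>)) (\<lambda>n. h n * W n)"
  proof (rule Bochner_Integration.integrable_bound)
    show "integrable (measure_pmf (poisson_pmf \<mu>)) (\<lambda>n. C * W n)"
      using int by simp
    show "AE n in measure_pmf (poisson_pmf \<mu>). norm (h n * W n) \<le> norm (C * W n)"
      using h_bounded W_nonneg C by (intro AE_I2) (simp add: abs_mult mult_right_mono)
  qed simp
  have term_le: "\<bar>?P n * (h n * W n)\<bar> \<le> c * u (n + l)" for n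
  proof -
    have "\<bar>?P n * (h n * W n)\<bar> = \<bar>h n\<bar> * (?P n * W n)"
      using W_nonneg[of n] by (simp add: abs_mult)
    also have "\<dots> \<le> C / (real n + 1) ^ l * (?P n * W n)"
      using h[of n] W_nonneg[of n] by (intro mult_right_mono) simp_all
    also have "\<dots> = C * (?P n / (real n + 1) ^ l) * W n"
      by simp
    also have "\<dots> \<le> C * (fact l / \<mu> ^ l * ?P (n + l)) * W n"
      using C W_nonneg[of n] pmf_poisson_div_power_le[OF \<mu>, of n l]
      by (intro mult_left_mono mult_right_mono)
    also have "\<dots> \<le> C * (fact l / \<mu> ^ l * ?P (n + l)) * (K ^ l * W (n + l))"
      using C \<mu> le_power_mult_shift[where W = W, OF W_step K, of n l]
      by (intro mult_left_mono) simp_all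
    also have "\<dots> = c * u (n + l)"
      unfolding c_def u_def by (simp add: power_divide)
    finally show ?thesis .
  qed
  have u_sums: "u sums ?E W"
    unfolding u_def by (rule pmf_expectation_sums[OF int])
  hence summable_shift: "summable (\<lambda>n. u (n + l))"
    by (intro summable_ignore_initial_segment) (simp add: sums_iff)
  have summable_abs: "summable (\<lambda>n. \<bar>?P n * (h n * W n)\<bar>)"
    by (rule summable_comparison_test'[OF summable_mult[OF summable_shift, of c]]) (simp add: term_le)
  have "\<bar>?E (\<lambda>n. h n * W n)\<bar> = \<bar>\<Sum>n. ?P n * (h n * W n)\<bar>"
    using pmf_expectation_sums[OF int_hW] by (simp add: sums_iff)
  also have "\<dots> \<le> (\<Sum>n. \<bar>?P n * (h n * W n)\<bar>)"
    using summable_abs by (rule summable_rabs)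
  also have "\<dots> \<le> (\<Sum>n. c * u (n + l))"
    using term_le summable_abs summable_mult[OF summable_shift] by (rule suminf_le)
  also have "\<dots> = c * (\<Sum>n. u (n + l))"
    using summable_shift by (rule suminf_mult)
  also have "\<dots> \<le> c * ?E W"
  proof (rule mult_left_mono[OF _ c])
    have "(\<Sum>i<l. u i) \<ge> 0"
      unfolding u_def using W_nonneg by (intro sum_nonneg) simp
    thus "(\<Sum>n. u (n + l)) \<le> ?E W"
      using suminf_split_initial_segment[of u l] u_sums by (simp add: sums_iff)
  qed
  finally show ?thesis
    unfolding c_def .
qed

lemma poisson_expectation_ratio_bound:
  fixes W h :: "nat \<Rightarrow> real"
  assumes W_nonneg: "\<And>n. W n \<ge> 0" and W_step: "\<And>n. W n \<le> K * W (Suc n)" and K: "K \<ge> 0"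
    and h: "\<And>n. \<bar>h n\<bar> \<le> C / (real n + 1) ^ l" and \<mu>: "\<mu> > 0"
  shows "\<bar>measure_pmf.expectation (poisson_pmf \<mu>) (\<lambda>n. h n * W n)
            / measure_pmf.expectation (poisson_pmf \<mu>) W\<bar> \<le> C * fact l * (K / \<mu>) ^ l"
proof -
  let ?E = "measure_pmf.expectation (poisson_pmf \<mu>)"
  define c where "c = C * fact l * (K / \<mu>) ^ l"
  have "C \<ge> 0"
    using order_trans[OF abs_ge_zero h[of 0]] by simp
  hence c: "c \<ge> 0"
    unfolding c_def using K \<mu> by simp
  show ?thesis
  proof (cases "integrable (measure_pmf (poisson_pmf \<mu>)) W \<and> ?E W \<noteq> 0")
    case True
    have "?E W \<ge> 0"
      using W_nonneg by (intro Bochner_Integration.integral_nonneg) simp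
    with True have EW: "?E W > 0"
      by linarith
    have "\<bar>?E (\<lambda>n. h n * W n) / ?E W\<bar> = \<bar>?E (\<lambda>n. h n * W n)\<bar> / ?E W"
      using EW by simp
    also have "\<dots> \<le> c * ?E W / ?E W"
      using poisson_expectation_decay[where W = W and h = h, OF W_nonneg W_step K h \<mu>] True EW
      unfolding c_def by (intro divide_right_mono) simp_all
    also have "\<dots> = c"
      using EW by simp
    finally show ?thesis
      unfolding c_def .
  next
    case False
    hence "?E W = 0"
      by (auto simp: not_integrable_integral_eq)
    with c show ?thesis
      unfolding c_def by simp
  qed
qed

lemma condE_w_ratio_bound:
  assumes "p > 0" "a \<ge> 0" "b \<ge> 0" "b \<le> real p / 2 + real k"
    and "a = 0 \<Longrightarrow> b < real p / 2 + real k" and "h \<in> O(\<lambda>n. 1 / real n ^ l)"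
  shows "\<exists>d>0. \<forall>y>0. \<bar>condE (\<lambda>n. h n * w p a b k n) y / condE (w p a b k) y\<bar> \<le> d / y ^ l"
proof -
  obtain C where C: "C > 0" "\<And>n. \<bar>h n\<bar> \<le> C / (real n + 1) ^ l"
    using bigo_inverse_power_imp_bound[OF assms(6)] by blast
  obtain K where K: "K > 0" "\<And>n. w p a b k n \<le> K * w p a b k (Suc n)"
    using w_le_const_mult_w_Suc[OF assms(1-5)] by blast
  have w_nonneg: "w p a b k n \<ge> 0" for n
    using w_pos[OF assms(1-3,5)] by (rule less_imp_le)
  have "\<bar>condE (\<lambda>n. h n * w p a b k n) y / condE (w p a b k) y\<bar> \<le> C * fact l * (2 * K) ^ l / y ^ l"
    if "y > 0" for y
  proof -
    have "\<bar>condE (\<lambda>n. h n * w p a b k n) y / condE (w p a b k) y\<bar> \<le> C * fact l * (K / (y / 2)) ^ l"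
      unfolding condE_def using w_nonneg K C(2) that
      by (intro poisson_expectation_ratio_bound[where W = "w p a b k"]) auto
    thus ?thesis
      by (simp add: power_divide mult_ac)
  qed
  moreover have "C * fact l * (2 * K) ^ l > 0"
    using C(1) K(1) by simp
  ultimately show ?thesis by blast
qed

theorem propositionA6:
  fixes p :: nat and a b :: real and l :: nat and h :: "nat \<Rightarrow> real"
  assumes "p \<ge> 3" and "a \<ge> 0" and "b > 0"
    and "(a > 0 \<and> real p / 2 - 1 \<le> b \<and> b \<le> real p / 2) \<or>
         (a = 0 \<and> real p / 2 - 1 \<le> b \<and> b < real p / 2)"
    and "l \<in> {1, 2}"
    and "h \<in> O(\<lambda>n. 1 / real n ^ l)"
  shows "\<exists>d::real. 0 < d \<and> (\<forall>k \<in> {1, 2, 3::nat}. \<forall>y::real. y > 0 \<longrightarrow>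
           \<bar>condE (\<lambda>n. h n * w p a b (k - 1) n) y / condE (w p a b (k - 1)) y\<bar> \<le> d / y ^ l)"
proof -
  have "\<forall>j. \<exists>d>0. \<forall>y>0. \<bar>condE (\<lambda>n. h n * w p a b j n) y / condE (w p a b j) y\<bar> \<le> d / y ^ l"
    using assms(1-4,6) by (intro allI condE_w_ratio_bound) auto
  then obtain d where d_pos: "\<And>j. d j > 0"
    and d: "\<And>j y. y > 0 \<Longrightarrow> \<bar>condE (\<lambda>n. h n * w p a b j n) y / condE (w p a b j) y\<bar> \<le> d j / y ^ l"
    by metis
  show ?thesis
  proof (intro exI[of _ "d 0 + d 1 + d 2"] conjI ballI allI impI)
    show "0 < d 0 + d 1 + d 2"
      using d_pos[of 0] d_pos[of 1] d_pos[of 2] by simp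
    fix k :: nat and y :: real
    assume "k \<in> {1, 2, 3}" and "y > 0"
    hence "d (k - 1) \<le> d 0 + d 1 + d 2"
      using d_pos[of 0] d_pos[of 1] d_pos[of 2] by auto
    with \<open>y > 0\<close> have "d (k - 1) / y ^ l \<le> (d 0 + d 1 + d 2) / y ^ l"
      by (simp add: divide_right_mono)
    with d[OF \<open>y > 0\<close>, of "k - 1"]
    show "\<bar>condE (\<lambda>n. h n * w p a b (k - 1) n) y / condE (w p a b (k - 1)) y\<bar> \<le> (d 0 + d 1 + d 2) / y ^ l"
      by linarith
  qed
qed

end
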